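(* For each $m \ge 2$ let $F_m \in \mathbb{R}^3$ be the vector of uniform expected payoffs of the imbalanced $(m,3)$-RPS. Then there exist vectors $u_m \in \mathbb{R}^3$ such that, for every $m$, $u_m$ majorizes the vector of uniform expected payoffs of every $(m,3)$-RPS game, and $\|F_m - u_m\| \to 0$ as $m \to \infty$ (indeed at an exponential rate of order $m(2/3)^{m}$).
   Context: An $(m,n)$-RPS game is a symmetric, zero-sum, win/lose game with $m$ players and $n$ pure strategies ("objects"), played without collusion. The rules assign to every multiset $c$ of $m$ chosen objects a single winning object $\phi(c)\in c$; every player who chose $\phi(c)$ wins and every other player loses. If there are $m'$ winners, each winner receives payoff $\frac{m-m'}{m'}$ and each loser receives payoff $-1$. The uniform expected payoff of an object $o$ is the expected payoff of a player who chooses $o$ while each of the other $m-1$ players independently chooses an object uniformly at random. The vector of uniform expected payoffs lists these values over all objects; majorization is the standard majorization order on vectors (comparing sorted partial sums, with equal total sums). The imbalanced $(m,3)$-RPS has objects $R,P,S$ with the following rules: any multiset containing at least one $S$ and at least one $R$ is won by $R$; any multiset containing only $R$'s and $P$'s (with at least one of each) is won by $P$; any multiset containing only $P$'s and $S$'s (with at least one of each) is won by $S$; a multiset consisting of a single object type is won by that object. *)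

theory Defs
  imports "HOL-Analysis.Analysis" "HOL-Library.Multiset" "HOL-Library.Landau_Symbols"
begin

text \<open>An (m,n)-RPS game on a finite object type 'a: a rule assigning to every
  multiset of m chosen objects a winning object occurring in it.\<close>
definition is_RPS :: "nat \<Rightarrow> ('a::finite multiset \<Rightarrow> 'a) \<Rightarrow> bool" where
  "is_RPS m \<phi> \<longleftrightarrow> (\<forall>c. size c = m \<longrightarrow> \<phi> c \<in># c)"

definition rps_payoff :: "nat \<Rightarrow> ('a multiset \<Rightarrow> 'a) \<Rightarrow> 'a multiset \<Rightarrow> 'a \<Rightarrow> real" where
  "rps_payoff m \<phi> c a =
     (if \<phi> c = a then (real m - real (count c a)) / real (count c a) else -1)"

text \<open>Uniform expected payoff: the other m-1 players choose independently and
  uniformly at random (average over all lists of their choices).\<close>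
definition uniform_payoff :: "nat \<Rightarrow> ('a::finite multiset \<Rightarrow> 'a) \<Rightarrow> 'a \<Rightarrow> real" where
  "uniform_payoff m \<phi> a =
     (\<Sum>ys\<in>{ys::'a list. length ys = m - 1}. rps_payoff m \<phi> (add_mset a (mset ys)) a)
       / real (CARD('a)) ^ (m - 1)"

definition payoff_vec :: "nat \<Rightarrow> ('n::finite multiset \<Rightarrow> 'n) \<Rightarrow> real^'n" where
  "payoff_vec m \<phi> = (\<chi> a. uniform_payoff m \<phi> a)"

definition top_sum :: "nat \<Rightarrow> (real, 'n::{finite,linorder}) vec \<Rightarrow> real" where
  "top_sum k x = sum_list (take k (rev (sort (map (\<lambda>i. x $ i) (sorted_list_of_set (UNIV::'n set))))))"

definition majorizes :: "(real, 'n::{finite,linorder}) vec \<Rightarrow> (real, 'n) vec \<Rightarrow> bool" where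
  "majorizes x y \<longleftrightarrow> (\<forall>k \<le> card (UNIV :: 'n set). top_sum k y \<le> top_sum k x)
                       \<and> (\<Sum>i\<in>UNIV. x $ i) = (\<Sum>i\<in>UNIV. y $ i)"

abbreviation objR :: 3 where "objR \<equiv> 0"
abbreviation objP :: 3 where "objP \<equiv> 1"
abbreviation objS :: 3 where "objS \<equiv> 2"

definition imbalanced :: "3 multiset \<Rightarrow> 3" where
  "imbalanced c =
     (if objR \<in># c \<and> objS \<in># c then objR
      else if objR \<in># c \<and> objP \<in># c then objP
      else if objP \<in># c \<and> objS \<in># c then objS
      else if objR \<in># c then objR
      else if objP \<in># c then objP
      else objS)"

end

theory Submission
  imports Defs "HOL-Real_Asymp.Real_Asymp"
begin

(*
  An object's uniform payoff never exceeds what it would get by winning every play, a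
  quantity w_m independent of the object by symmetry of the uniform distribution. It is at
  least l_m = -1 + 3^(1-m), since the object wins the unanimous play and loses at most 1
  otherwise. The three payoffs sum to zero, as every play is zero-sum and the players are
  exchangeable. For three objects these facts say that u_m = (w_m, -w_m - l_m, l_m)
  majorizes every payoff vector.

  In the imbalanced game R wins every play in which some opponent chose S, and S loses every
  play in which some opponent chose R. The remaining opponent profiles form a fraction
  (2/3)^(m-1) of all, and on each of them a payoff changes by at most m; so the payoffs of R
  and S, and by the zero sum also that of P, are within O(m (2/3)^m) of u_m.
*)

lemma finite_lists_length: "finite {ys::'a::finite list. length ys = n}"
  using finite_lists_length_eq[of "UNIV::'a set" n] by simp

lemma card_lists_length: "card {ys::'a::finite list. length ys = n} = CARD('a) ^ n"
  using card_lists_length_eq[of "UNIV::'a set" n] by simp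

lemma card_lists_length_avoiding:
  "card {ys::'a::finite list. length ys = n \<and> z \<notin> set ys} = (CARD('a) - 1) ^ n"
proof -
  have "{ys::'a list. length ys = n \<and> z \<notin> set ys} = {ys. set ys \<subseteq> UNIV - {z} \<and> length ys = n}"
    by auto
  then show ?thesis
    using card_lists_length_eq[of "UNIV - {z}" n] by (simp add: card_Diff_singleton)
qed

lemma sum_lists_length_count_list_swap:
  fixes x y :: 'a and h :: "nat \<Rightarrow> 'b::comm_monoid_add"
  shows "(\<Sum>ys | length ys = n. h (count_list ys x)) = (\<Sum>ys | length ys = n. h (count_list ys y))"
proof -
  define \<sigma> where "\<sigma> z = (if z = x then y else if z = y then x else z)" for z
  have \<sigma>_involutive: "\<sigma> (\<sigma> z) = z" for z
    by (simp add: \<sigma>_def)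
  have count_map_\<sigma>: "count_list (map \<sigma> ys) y = count_list ys x" for ys
    by (induction ys) (auto simp: \<sigma>_def)
  have "bij_betw (map \<sigma>) {ys. length ys = n} {ys. length ys = n}"
    by (rule bij_betw_byWitness[where f' = "map \<sigma>"]) (auto simp: comp_def \<sigma>_involutive)
  then have "(\<Sum>ys | length ys = n. h (count_list ys y))
      = (\<Sum>ys | length ys = n. h (count_list (map \<sigma> ys) y))"
    by (rule sum.reindex_bij_betw[symmetric])
  then show ?thesis
    by (simp add: count_map_\<sigma>)
qed

lemma sum_lists_length_Suc:
  fixes f :: "'a::finite list \<Rightarrow> 'b::comm_monoid_add"
  shows "(\<Sum>xs | length xs = Suc n. f xs) = (\<Sum>a\<in>UNIV. \<Sum>ys | length ys = n. f (a # ys))"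
proof -
  have "{xs::'a list. length xs = Suc n} = (\<lambda>(a, ys). a # ys) ` (UNIV \<times> {ys. length ys = n})"
    by (auto simp: length_Suc_conv)
  moreover have "inj (\<lambda>(a::'a, ys). a # ys)"
    by (auto intro: injI)
  ultimately show ?thesis
    by (simp add: sum.reindex inj_on_subset sum.cartesian_product prod.case_distrib)
qed

lemma inj_rotate: "inj (rotate n)"
proof (induction n)
  case (Suc n)
  have "rotate (Suc n) = rotate1 \<circ> rotate n"
    by auto
  then show ?case
    using inj_compose[OF inj_rotate1 Suc.IH] by metis
qed simp

lemma mset_rotate: "mset (rotate n xs) = mset xs"
proof -
  have "mset (rotate1 ys) = mset ys" for ys :: "'a list"
    by (cases ys) simp_all
  then show ?thesis
    by (induction n) simp_all
qed

lemma sum_lists_length_nth: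
  fixes g :: "'a::finite multiset \<Rightarrow> 'a \<Rightarrow> 'b::comm_monoid_add"
  assumes "i < n"
  shows "(\<Sum>xs | length xs = n. g (mset xs) (xs ! i)) = (\<Sum>xs | length xs = n. g (mset xs) (xs ! 0))"
proof -
  let ?L = "{xs::'a list. length xs = n}"
  have inj: "inj_on (rotate i) ?L"
    using inj_rotate by (rule inj_on_subset) simp
  then have "rotate i ` ?L = ?L"
    by (intro endo_inj_surj finite_lists_length) auto
  then have "(\<Sum>xs\<in>?L. g (mset xs) (xs ! 0)) = (\<Sum>xs\<in>?L. g (mset (rotate i xs)) (rotate i xs ! 0))"
    using sum.reindex[OF inj, of "\<lambda>xs. g (mset xs) (xs ! 0)"] by simp
  also have "\<dots> = (\<Sum>xs\<in>?L. g (mset xs) (xs ! i))"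
    using assms by (intro sum.cong) (simp_all add: mset_rotate nth_rotate)
  finally show ?thesis ..
qed

lemma sum_lists_length_avoiding:
  fixes c :: "'b::semiring_1"
  shows "(\<Sum>ys::'a::finite list | length ys = n. if z \<notin> set ys then c else 0)
    = of_nat ((CARD('a) - 1) ^ n) * c"
proof -
  have "(\<Sum>ys::'a list | length ys = n. if z \<notin> set ys then c else 0)
      = (\<Sum>ys \<in> {ys \<in> {ys. length ys = n}. z \<notin> set ys}. c)"
    by (rule sum.inter_filter[symmetric, OF finite_lists_length])
  also have "{ys \<in> {ys::'a list. length ys = n}. z \<notin> set ys} = {ys. length ys = n \<and> z \<notin> set ys}"
    by auto
  finally show ?thesis
    by (simp add: card_lists_length_avoiding)
qed

lemma rps_payoff_bounds:
  assumes "a \<in># c"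
  shows "-1 \<le> rps_payoff m \<phi> c a" and "rps_payoff m \<phi> c a \<le> real m - 1"
proof -
  have k: "1 \<le> real (count c a)"
    using assms by (simp add: Suc_le_eq)
  then have "0 \<le> real m / real (count c a)" "real m / real (count c a) \<le> real m"
    by (simp_all add: divide_le_eq mult_le_cancel_left1)
  moreover have "(real m - real (count c a)) / real (count c a) = real m / real (count c a) - 1"
    using k by (simp add: diff_divide_distrib)
  ultimately show "-1 \<le> rps_payoff m \<phi> c a" "rps_payoff m \<phi> c a \<le> real m - 1"
    by (simp_all add: rps_payoff_def)
qed

lemma sum_list_map_if_eq:
  "sum_list (map (\<lambda>a. if a = w then c else 0) xs) = of_nat (count_list xs w) * (c::'b::semiring_1)"
  by (induction xs) (simp_all add: algebra_simps)

lemma rps_payoff_sum_players: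
  assumes "length xs = m" and "\<phi> (mset xs) \<in> set xs"
  shows "(\<Sum>i<m. rps_payoff m \<phi> (mset xs) (xs ! i)) = 0"
proof -
  define w where "w = \<phi> (mset xs)"
  define k where "k = real (count_list xs w)"
  have "k > 0"
    unfolding k_def w_def using assms(2) count_list_0_iff[of xs "\<phi> (mset xs)"] by simp
  then have payoff: "rps_payoff m \<phi> (mset xs) = (\<lambda>a. (if a = w then real m / k else 0) - 1)"
    by (auto simp: fun_eq_iff rps_payoff_def w_def[symmetric] k_def count_mset diff_divide_distrib)
  have "(\<Sum>i<m. rps_payoff m \<phi> (mset xs) (xs ! i)) = sum_list (map (rps_payoff m \<phi> (mset xs)) xs)"
    using assms(1) by (simp add: sum_list_sum_nth atLeast0LessThan)
  also have "\<dots> = k * (real m / k) - real m"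
    unfolding payoff sum_list_subtractf sum_list_map_if_eq
    using assms(1) by (simp add: k_def sum_list_triv)
  finally show ?thesis
    using \<open>k > 0\<close> by simp
qed

lemma uniform_payoff_sum_zero:
  fixes \<phi> :: "'a::finite multiset \<Rightarrow> 'a"
  assumes "is_RPS m \<phi>" and "m \<ge> 1"
  shows "(\<Sum>a\<in>UNIV. uniform_payoff m \<phi> a) = 0"
proof -
  let ?L = "{xs::'a list. length xs = m}"
  define P where "P xs i = rps_payoff m \<phi> (mset xs) (xs ! i)" for xs i
  obtain n where m: "m = Suc n"
    using assms(2) by (cases m) auto
  have first_player: "(\<Sum>a\<in>UNIV. \<Sum>ys | length ys = m - 1. rps_payoff m \<phi> (add_mset a (mset ys)) a)
      = (\<Sum>xs\<in>?L. P xs 0)"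
    unfolding m P_def sum_lists_length_Suc by simp
  have "(\<Sum>i<m. \<Sum>xs\<in>?L. P xs i) = (\<Sum>i<m. \<Sum>xs\<in>?L. P xs 0)"
    unfolding P_def by (intro sum.cong refl sum_lists_length_nth) simp
  then have "real m * (\<Sum>xs\<in>?L. P xs 0) = (\<Sum>i<m. \<Sum>xs\<in>?L. P xs i)"
    by simp
  also have "\<dots> = (\<Sum>xs\<in>?L. \<Sum>i<m. P xs i)"
    by (rule sum.swap)
  also have "\<dots> = 0"
  proof (rule sum.neutral, rule ballI)
    fix xs assume "xs \<in> ?L"
    then have "\<phi> (mset xs) \<in> set xs"
      using assms(1) by (simp add: is_RPS_def flip: set_mset_mset)
    then show "(\<Sum>i<m. P xs i) = 0"
      using \<open>xs \<in> ?L\<close> by (simp add: P_def rps_payoff_sum_players)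
  qed
  finally have "(\<Sum>xs\<in>?L. P xs 0) = 0"
    using m by simp
  then show ?thesis
    unfolding uniform_payoff_def sum_divide_distrib[symmetric] first_player by simp
qed

lemma uniform_payoff_always_winning_eq:
  fixes x y :: "'a::finite"
  shows "uniform_payoff m (\<lambda>_. x) x = uniform_payoff m (\<lambda>_. y) y"
proof -
  have payoff: "rps_payoff m (\<lambda>_. z) (add_mset z (mset ys)) z
      = (real m - real (Suc (count_list ys z))) / real (Suc (count_list ys z))" for z :: 'a and ys
    by (simp add: rps_payoff_def count_mset)
  show ?thesis
    unfolding uniform_payoff_def payoff
    using sum_lists_length_count_list_swap[where x = x and y = y
        and h = "\<lambda>k. (real m - real (Suc k)) / real (Suc k)"]
    by simp
qed

lemma uniform_payoff_le_always_winning: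
  fixes \<phi> :: "'a::finite multiset \<Rightarrow> 'a" and x y :: 'a
  shows "uniform_payoff m \<phi> x \<le> uniform_payoff m (\<lambda>_. y) y"
proof -
  have "rps_payoff m \<phi> (add_mset x c) x \<le> rps_payoff m (\<lambda>_. x) (add_mset x c) x" for c
    using rps_payoff_bounds(1)[of x "add_mset x c" m "\<lambda>_. x"] by (simp add: rps_payoff_def)
  then have "uniform_payoff m \<phi> x \<le> uniform_payoff m (\<lambda>_. x) x"
    unfolding uniform_payoff_def by (intro divide_right_mono sum_mono) simp_all
  then show ?thesis
    by (simp add: uniform_payoff_always_winning_eq[of m x y])
qed

lemma uniform_payoff_always_losing:
  fixes x y :: "'a::finite"
  assumes "x \<noteq> y"
  shows "uniform_payoff m (\<lambda>_. y) x = -1"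
  using assms by (simp add: uniform_payoff_def rps_payoff_def card_lists_length)

lemma uniform_payoff_ge_unanimity:
  fixes \<phi> :: "'a::finite multiset \<Rightarrow> 'a"
  assumes "is_RPS m \<phi>" and "m \<ge> 1"
  shows "-1 + 1 / CARD('a) ^ (m - 1) \<le> uniform_payoff m \<phi> x"
proof -
  let ?L = "{ys::'a list. length ys = m - 1}"
  define r where "r = replicate (m - 1) x"
  have unanimous: "add_mset x (mset r) = replicate_mset m x"
    using assms(2) by (cases m) (simp_all add: r_def)
  have "\<phi> (replicate_mset m x) = x"
    using assms(1)[unfolded is_RPS_def, rule_format, of "replicate_mset m x"]
    by (simp split: if_splits)
  then have "rps_payoff m \<phi> (add_mset x (mset r)) x = 0"
    using assms(2) by (simp add: unanimous rps_payoff_def)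
  then have "(if ys = r then 1 else 0) - 1 \<le> rps_payoff m \<phi> (add_mset x (mset ys)) x" for ys
    using rps_payoff_bounds(1)[of x "add_mset x (mset ys)" m \<phi>] by auto
  then have "(\<Sum>ys\<in>?L. (if ys = r then 1 else 0) - 1) \<le> (\<Sum>ys\<in>?L. rps_payoff m \<phi> (add_mset x (mset ys)) x)"
    by (rule sum_mono)
  moreover have "(\<Sum>ys\<in>?L. (if ys = r then 1 else 0) - 1) = 1 - real CARD('a) ^ (m - 1)"
    using sum.delta[OF finite_lists_length, of r "\<lambda>_. 1::real"]
    by (simp add: sum_subtractf card_lists_length r_def)
  ultimately have "(1 - real CARD('a) ^ (m - 1)) / real CARD('a) ^ (m - 1) \<le> uniform_payoff m \<phi> x"
    unfolding uniform_payoff_def by (simp add: divide_right_mono)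
  then show ?thesis
    by (simp add: diff_divide_distrib)
qed

lemma abs_uniform_payoff_diff_le:
  fixes \<phi> \<psi> :: "'a::finite multiset \<Rightarrow> 'a"
  assumes agree: "\<And>ys. length ys = m - 1 \<Longrightarrow> z \<in> set ys \<Longrightarrow>
    \<phi> (add_mset x (mset ys)) = \<psi> (add_mset x (mset ys))"
  shows "\<bar>uniform_payoff m \<phi> x - uniform_payoff m \<psi> x\<bar>
    \<le> real m * (real (CARD('a) - 1) / CARD('a)) ^ (m - 1)"
proof -
  let ?L = "{ys::'a list. length ys = m - 1}"
  define D where "D ys = rps_payoff m \<phi> (add_mset x (mset ys)) x - rps_payoff m \<psi> (add_mset x (mset ys)) x"
    for ys
  have "\<bar>D ys\<bar> \<le> (if z \<notin> set ys then real m else 0)" if "ys \<in> ?L" for ys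
  proof (cases "z \<in> set ys")
    case True
    then show ?thesis
      using agree that by (simp add: D_def rps_payoff_def)
  next
    case False
    then show ?thesis
      using rps_payoff_bounds[of x "add_mset x (mset ys)" m \<phi>]
        rps_payoff_bounds[of x "add_mset x (mset ys)" m \<psi>]
      by (simp add: D_def abs_le_iff)
  qed
  then have "(\<Sum>ys\<in>?L. \<bar>D ys\<bar>) \<le> (\<Sum>ys\<in>?L. if z \<notin> set ys then real m else 0)"
    by (rule sum_mono)
  then have "\<bar>\<Sum>ys\<in>?L. D ys\<bar> \<le> real ((CARD('a) - 1) ^ (m - 1)) * real m"
    using sum_abs[of D ?L] unfolding sum_lists_length_avoiding by linarith
  moreover have "uniform_payoff m \<phi> x - uniform_payoff m \<psi> x = (\<Sum>ys\<in>?L. D ys) / real CARD('a) ^ (m - 1)"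
    by (simp add: uniform_payoff_def D_def sum_subtractf diff_divide_distrib)
  ultimately have "\<bar>uniform_payoff m \<phi> x - uniform_payoff m \<psi> x\<bar>
      \<le> real ((CARD('a) - 1) ^ (m - 1)) * real m / real CARD('a) ^ (m - 1)"
    by (simp add: divide_right_mono)
  then show ?thesis
    by (simp add: power_divide mult.commute)
qed

lemma UNIV_3_eq: "(UNIV::3 set) = {0, 1, 2}"
proof -
  have "x = 0 \<or> x = 1 \<or> x = 2" for x :: 3
    using exhaust_3[of x] by auto
  then show ?thesis
    by auto
qed

lemma sum_UNIV_3: "(\<Sum>i\<in>UNIV. f i) = f 0 + f 1 + f (2::3)"
  unfolding UNIV_3_eq by (simp add: add.assoc)

lemma sorted_list_of_set_UNIV_3: "sorted_list_of_set (UNIV::3 set) = [0, 1, 2]"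
proof -
  have "(0::3) < 1" "(1::3) < 2"
    unfolding less_bit1_def bit1.Rep_0 bit1.Rep_1 bit1.Rep_numeral by simp_all
  then have "sorted_wrt (<) [0::3, 1, 2]"
    by simp
  moreover have "set [0::3, 1, 2] = UNIV"
    using UNIV_3_eq by simp
  ultimately show ?thesis
    using sorted_list_of_set_unique[of UNIV "[0::3, 1, 2]"] by simp
qed

lemma top_sum_3:
  fixes x :: "real^3"
  shows "top_sum 0 x = 0"
    and "top_sum 1 x = max (x$0) (max (x$1) (x$2))"
    and "top_sum 2 x = x$0 + x$1 + x$2 - min (x$0) (min (x$1) (x$2))"
    and "top_sum 3 x = x$0 + x$1 + x$2"
proof -
  have "sum_list (take 1 (rev (sort [a, b, c]))) = max a (max b c)"
    and "sum_list (take 2 (rev (sort [a, b, c]))) = a + b + c - min a (min b c)"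
    and "sum_list (take 3 (rev (sort [a, b, c]))) = a + b + c" for a b c :: real
    by (cases "a \<le> b"; cases "b \<le> c"; cases "a \<le> c"; simp add: max_def min_def)+
  then show "top_sum 0 x = 0" "top_sum 1 x = max (x$0) (max (x$1) (x$2))"
    "top_sum 2 x = x$0 + x$1 + x$2 - min (x$0) (min (x$1) (x$2))" "top_sum 3 x = x$0 + x$1 + x$2"
    by (simp_all add: top_sum_def sorted_list_of_set_UNIV_3)
qed

lemma majorizes_3I:
  fixes u y :: "real^3"
  assumes le_u0: "\<And>i. y$i \<le> u$0" and u2_le: "\<And>i. u$2 \<le> y$i"
    and sums: "(\<Sum>i\<in>UNIV. u$i) = (\<Sum>i\<in>UNIV. y$i)"
  shows "majorizes u y"
  unfolding majorizes_def
proof (intro conjI allI impI)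
  have total: "u$0 + u$1 + u$2 = y$0 + y$1 + y$2"
    using sums by (simp add: sum_UNIV_3)
  fix k assume "k \<le> CARD(3)"
  then consider "k = 0" | "k = 1" | "k = 2" | "k = 3"
    by fastforce
  then show "top_sum k y \<le> top_sum k u"
  proof cases
    case 2
    show ?thesis
      using le_u0[of 0] le_u0[of 1] le_u0[of 2] unfolding \<open>k = 1\<close> top_sum_3
      by (auto simp: le_max_iff_disj)
  next
    case 3
    show ?thesis
      using u2_le[of 0] u2_le[of 1] u2_le[of 2] total unfolding \<open>k = 2\<close> top_sum_3
      by linarith
  qed (use total in \<open>simp_all add: top_sum_3\<close>)
qed (fact sums)

definition rps_majorant :: "nat \<Rightarrow> real^3" where
  "rps_majorant m =
    (let w = uniform_payoff m (\<lambda>_. objR) objR; l = -1 + 1 / 3 ^ (m - 1)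
     in \<chi> i. if i = objR then w else if i = objS then l else - w - l)"

lemma rps_majorant_nth:
  "rps_majorant m $ objR = uniform_payoff m (\<lambda>_. objR) objR"
  "rps_majorant m $ objS = -1 + 1 / 3 ^ (m - 1)"
  "rps_majorant m $ objP = - uniform_payoff m (\<lambda>_. objR) objR - (-1 + 1 / 3 ^ (m - 1))"
  by (simp_all add: rps_majorant_def Let_def)

lemma majorizes_rps_majorant:
  fixes \<phi> :: "3 multiset \<Rightarrow> 3"
  assumes "is_RPS m \<phi>" and "m \<ge> 1"
  shows "majorizes (rps_majorant m) (payoff_vec m \<phi>)"
proof (rule majorizes_3I)
  show "payoff_vec m \<phi> $ i \<le> rps_majorant m $ 0" for i
    using uniform_payoff_le_always_winning[of m \<phi> i objR] by (simp add: payoff_vec_def rps_majorant_nth)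
  show "rps_majorant m $ 2 \<le> payoff_vec m \<phi> $ i" for i
    using uniform_payoff_ge_unanimity[OF assms, of i] by (simp add: payoff_vec_def rps_majorant_nth)
  have "(\<Sum>i\<in>UNIV. payoff_vec m \<phi> $ i) = 0"
    using uniform_payoff_sum_zero[OF assms] by (simp add: payoff_vec_def)
  then show "(\<Sum>i\<in>UNIV. rps_majorant m $ i) = (\<Sum>i\<in>UNIV. payoff_vec m \<phi> $ i)"
    by (simp add: sum_UNIV_3 rps_majorant_nth)
qed

lemma is_RPS_imbalanced:
  assumes "m \<ge> 1"
  shows "is_RPS m imbalanced"
  unfolding is_RPS_def
proof (intro allI impI)
  fix c :: "3 multiset" assume "size c = m"
  then obtain z where "z \<in># c"
    using assms by (metis multiset_nonemptyE size_empty not_one_le_zero)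
  moreover have "z = objR \<or> z = objP \<or> z = objS"
    using UNIV_3_eq by auto
  ultimately show "imbalanced c \<in># c"
    by (auto simp: imbalanced_def)
qed

lemma uniform_payoff_imbalanced_objR_approx:
  "\<bar>uniform_payoff m imbalanced objR - uniform_payoff m (\<lambda>_. objR) objR\<bar> \<le> real m * (2/3) ^ (m - 1)"
  using abs_uniform_payoff_diff_le[where m = m and z = objS and \<phi> = imbalanced and \<psi> = "\<lambda>_. objR"]
  by (simp add: imbalanced_def)

lemma uniform_payoff_imbalanced_objS_le:
  "uniform_payoff m imbalanced objS \<le> -1 + real m * (2/3) ^ (m - 1)"
  using abs_uniform_payoff_diff_le[where m = m and z = objR and x = objS and \<phi> = imbalanced and \<psi> = "\<lambda>_. objR"]
    uniform_payoff_always_losing[of objS objR m]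
  by (simp add: imbalanced_def abs_le_iff)

lemma norm_payoff_vec_imbalanced_minus_majorant:
  assumes "m \<ge> 1"
  shows "norm (payoff_vec m imbalanced - rps_majorant m) \<le> 6 * (real m * (2/3) ^ m)"
proof -
  define F where "F i = uniform_payoff m imbalanced i" for i
  define w where "w = uniform_payoff m (\<lambda>_. objR) objR"
  define l :: real where "l = -1 + 1 / 3 ^ (m - 1)"
  define q :: real where "q = real m * (2/3) ^ (m - 1)"
  have zero_sum: "F objR + F objP + F objS = 0"
    using uniform_payoff_sum_zero[OF is_RPS_imbalanced[OF assms] assms] by (simp add: F_def sum_UNIV_3)
  have R: "\<bar>F objR - w\<bar> \<le> q"
    using uniform_payoff_imbalanced_objR_approx by (simp add: F_def w_def q_def)
  have "l \<le> F objS" and "F objS \<le> -1 + q" and "-1 \<le> l"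
    using uniform_payoff_ge_unanimity[OF is_RPS_imbalanced[OF assms] assms, of objS]
      uniform_payoff_imbalanced_objS_le
    by (simp_all add: F_def l_def q_def)
  then have S: "\<bar>F objS - l\<bar> \<le> q"
    by (simp add: abs_le_iff)
  have P: "\<bar>F objP - (- w - l)\<bar> \<le> 2 * q"
    using zero_sum R S unfolding abs_le_iff by linarith
  from R S P have "\<bar>F objR - w\<bar> + \<bar>F objP - (- w - l)\<bar> + \<bar>F objS - l\<bar> \<le> 4 * q"
    by linarith
  moreover have "norm (payoff_vec m imbalanced - rps_majorant m)
      \<le> \<bar>F objR - w\<bar> + \<bar>F objP - (- w - l)\<bar> + \<bar>F objS - l\<bar>"
    using norm_le_l1_cart[of "payoff_vec m imbalanced - rps_majorant m"]
    by (simp add: sum_UNIV_3 payoff_vec_def rps_majorant_nth F_def w_def l_def add.assoc)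
  moreover have "4 * q = 6 * (real m * (2/3) ^ m)"
    using assms by (cases m) (simp_all add: q_def)
  ultimately show ?thesis
    by linarith
qed

theorem mainTheorem2:
  shows "\<exists>u :: nat \<Rightarrow> real^3.
     (\<forall>m \<ge> 2. \<forall>\<phi> :: 3 multiset \<Rightarrow> 3. is_RPS m \<phi> \<longrightarrow> majorizes (u m) (payoff_vec m \<phi>))
   \<and> ((\<lambda>m. norm (payoff_vec m imbalanced - u m)) \<longlongrightarrow> 0) at_top
   \<and> (\<lambda>m. norm (payoff_vec m imbalanced - u m)) \<in> O(\<lambda>m. real m * (2/3) ^ m)"
proof (intro exI[of _ rps_majorant] conjI allI impI)
  show "majorizes (rps_majorant m) (payoff_vec m \<phi>)" if "m \<ge> 2" and "is_RPS m \<phi>" for m \<phi>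
    using majorizes_rps_majorant that by simp
  have bound: "eventually (\<lambda>m. norm (payoff_vec m imbalanced - rps_majorant m)
      \<le> 6 * (real m * (2/3) ^ m)) at_top"
    using norm_payoff_vec_imbalanced_minus_majorant eventually_at_top_linorder by blast
  have lim: "((\<lambda>m::nat. 6 * (real m * (2/3) ^ m)) \<longlongrightarrow> (0::real)) at_top"
    by real_asymp
  show "((\<lambda>m. norm (payoff_vec m imbalanced - rps_majorant m)) \<longlongrightarrow> 0) at_top"
    by (rule tendsto_sandwich[OF _ bound tendsto_const lim]) simp
  show "(\<lambda>m. norm (payoff_vec m imbalanced - rps_majorant m)) \<in> O(\<lambda>m. real m * (2/3) ^ m)"
    using bound by (intro bigoI[where c = 6]) simp
qed

end
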